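(* Let $W_{12}=\{(0,0,0),(0,0,1),(0,1,0),(1,0,0)\}\subseteq\{0,1\}^3$. Then $\Lambda(W_{12},3)=1$ and, for every integer $n\ge 4$, $$\Lambda(W_{12},n)=\frac12\binom n3 2^{n-3}.$$
   Context: The $n$-hypercube $Q_n$ is the graph on $\{0,1\}^n$ in which two sequences are adjacent iff they differ in exactly one coordinate. A $3$-subcube of $\{0,1\}^n$ is a set $C\subseteq\{0,1\}^n$ obtained by fixing $n-3$ coordinates to constant values and letting the remaining $3$ coordinates vary arbitrarily (equivalently, $Q_n[C]\cong Q_3$). For $H\subseteq\{0,1\}^3$ and $S\subseteq\{0,1\}^n$, a $3$-subcube $C$ gives a copy of $H$ in $S$ if there is a graph isomorphism $f$ from $Q_3$ to $Q_n[C]$ with $f(H)=S\cap C$. Let $\Lambda(H,S)$ be the number of $3$-subcubes giving a copy of $H$ in $S$, and $\Lambda(H,n)=\max\{\Lambda(H,S): S\subseteq\{0,1\}^n\}$ for $n\ge 3$. *)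

theory Defs
  imports Complex_Main
begin

text \<open>Vertices of the n-hypercube: boolean lists of length n (True = 1, False = 0).\<close>
definition cube :: "nat \<Rightarrow> bool list set" where
  "cube n = {xs. length xs = n}"

definition adj :: "nat \<Rightarrow> bool list \<Rightarrow> bool list \<Rightarrow> bool" where
  "adj n x y \<longleftrightarrow> card {i. i < n \<and> x ! i \<noteq> y ! i} = 1"

definition is_3subcube :: "nat \<Rightarrow> bool list set \<Rightarrow> bool" where
  "is_3subcube n C \<longleftrightarrow> (\<exists>I base. I \<subseteq> {..<n} \<and> card I = 3 \<and> base \<in> cube n \<and>
      C = {x \<in> cube n. \<forall>i<n. i \<notin> I \<longrightarrow> x ! i = base ! i})"

definition cube_iso :: "nat \<Rightarrow> bool list set \<Rightarrow> (bool list \<Rightarrow> bool list) \<Rightarrow> bool" where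
  "cube_iso n C f \<longleftrightarrow> bij_betw f (cube 3) C \<and>
     (\<forall>x\<in>cube 3. \<forall>y\<in>cube 3. adj 3 x y \<longleftrightarrow> adj n (f x) (f y))"

definition gives_copy :: "nat \<Rightarrow> bool list set \<Rightarrow> bool list set \<Rightarrow> bool list set \<Rightarrow> bool" where
  "gives_copy n H S C \<longleftrightarrow> (\<exists>f. cube_iso n C f \<and> f ` H = S \<inter> C)"

definition Lambda_set :: "nat \<Rightarrow> bool list set \<Rightarrow> bool list set \<Rightarrow> nat" where
  "Lambda_set n H S = card {C. is_3subcube n C \<and> gives_copy n H S C}"

definition Lambda :: "bool list set \<Rightarrow> nat \<Rightarrow> nat" where
  "Lambda H n = Max {Lambda_set n H S | S. S \<subseteq> cube n}"

definition W12 :: "bool list set" where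
  "W12 = {[False,False,False], [False,False,True], [False,True,False], [True,False,False]}"

end

theory Submission
  imports Defs
begin

text \<open>A \<open>3\<close>-subcube \<open>C\<close> gives a copy of \<open>W\<^sub>1\<^sub>2\<close> exactly when \<open>S\<close> meets \<open>C\<close> in a star, a vertex
  of \<open>C\<close> together with its three neighbours in \<open>C\<close>: \<open>W\<^sub>1\<^sub>2\<close> is the closed neighbourhood
  of \<open>000\<close>, and \<open>Q\<^sub>3\<close> is vertex-transitive.

  Upper bound: at most four of the eight facets of a \<open>4\<close>-subcube are stars. If both facets
  \<open>x\<^sub>i = c\<close> and \<open>x\<^sub>i = \<not> c\<close> are stars, with centres \<open>v\<close> and \<open>v'\<close>, then every other star facet
  \<open>x\<^sub>k = b\<close> forces \<open>v' = v + e\<^sub>i + e\<^sub>k\<close>, so all star facets lie in the directions \<open>i\<close> and \<open>k\<close>.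
  Every \<open>3\<close>-subcube lies in \<open>n - 3\<close> subcubes of dimension \<open>4\<close>, so double counting gives
  \<open>(n - 3) \<cdot> #stars \<le> 4 \<cdot> C(n,4) \<cdot> 2\<^bsup>n-4\<^esup> = (n - 3) \<cdot> C(n,3) \<cdot> 2\<^bsup>n-4\<^esup>\<close>.

  Lower bound: let \<open>S\<close> consist of the vertices of weight \<open>0\<close> or \<open>1\<close> mod \<open>4\<close>. On a \<open>3\<close>-subcube
  with an even number \<open>b\<close> of coordinates fixed to \<open>1\<close>, \<open>S\<close> is the star centred at the vertex
  whose free coordinates are all \<open>0\<close> (if \<open>4 dvd b\<close>) or all \<open>1\<close> (otherwise), and at least half
  of all \<open>3\<close>-subcubes have \<open>b\<close> even. For \<open>n = 3\<close> there is only one \<open>3\<close>-subcube.\<close>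

definition flip :: "bool list \<Rightarrow> nat \<Rightarrow> bool list" where
  "flip x i = x[i := \<not> x ! i]"

definition hamming :: "nat \<Rightarrow> bool list \<Rightarrow> bool list \<Rightarrow> nat" where
  "hamming n x y = card {i. i < n \<and> x ! i \<noteq> y ! i}"

lemma length_flip [simp]: "length (flip x i) = length x"
  by (simp add: flip_def)

lemma nth_flip: "j < length x \<Longrightarrow> flip x i ! j = (if j = i then \<not> x ! j else x ! j)"
  by (simp add: flip_def nth_list_update)

lemma flip_flip [simp]: "flip (flip x i) i = x"
  by (cases "i < length x") (simp_all add: flip_def list_update_beyond)

lemma flip_commute: "flip (flip x i) j = flip (flip x j) i"
  by (rule nth_equalityI) (auto simp: nth_flip)

lemma flip_inj: "i < length x \<Longrightarrow> j < length x \<Longrightarrow> flip x i = flip x j \<Longrightarrow> i = j"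
  by (metis nth_flip)

lemma flip_flip_notin_star:
  assumes "a < length v" "m < length v" "a \<noteq> m"
  shows "flip (flip v a) m \<notin> insert v (flip v ` M)"
proof
  assume "flip (flip v a) m \<in> insert v (flip v ` M)"
  then consider "flip (flip v a) m = v" | a' where "flip (flip v a) m = flip v a'"
    by blast
  then show False
  proof cases
    case 1
    then have "flip (flip v a) m ! a = v ! a" by simp
    then show False using assms by (simp add: nth_flip)
  next
    case (2 a')
    show False
    proof (cases "a' = a")
      case True
      have "flip (flip v a) m ! m = flip v a' ! m" using 2 by simp
      then show False using assms True by (simp add: nth_flip)
    next
      case False
      have "flip (flip v a) m ! a = flip v a' ! a" using 2 by simp
      then show False using assms False by (simp add: nth_flip)
    qed
  qed
qed

lemma finite_cube: "finite (cube n)"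
  using finite_lists_length_eq[of "UNIV :: bool set" n] by (simp add: cube_def)

lemma adj_iff_hamming: "adj n x y \<longleftrightarrow> hamming n x y = 1"
  by (simp add: adj_def hamming_def)

lemma hamming_eq_0_iff:
  assumes "x \<in> cube n" "y \<in> cube n"
  shows "hamming n x y = 0 \<longleftrightarrow> x = y"
proof -
  have "hamming n x y = 0 \<longleftrightarrow> (\<forall>i<n. x ! i = y ! i)"
    by (auto simp: hamming_def)
  also have "\<dots> \<longleftrightarrow> x = y"
    using assms by (auto simp: cube_def intro: nth_equalityI)
  finally show ?thesis .
qed

lemma adj_iff_flip:
  assumes "x \<in> cube n" "y \<in> cube n"
  shows "adj n x y \<longleftrightarrow> (\<exists>i<n. y = flip x i)"
proof
  assume "adj n x y"
  then obtain j where j: "{i. i < n \<and> x ! i \<noteq> y ! i} = {j}"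
    unfolding adj_def by (meson card_1_singletonE)
  have "y = flip x j"
    using j assms by (intro nth_equalityI) (auto simp: cube_def nth_flip)
  then show "\<exists>i<n. y = flip x i" using j by blast
next
  assume "\<exists>i<n. y = flip x i"
  then obtain j where "j < n" "y = flip x j" by blast
  then have "{i. i < n \<and> x ! i \<noteq> y ! i} = {j}"
    using assms by (auto simp: cube_def nth_flip split: if_splits)
  then show "adj n x y" by (simp add: adj_def)
qed

text \<open>A pattern \<open>p\<close> of length \<open>n\<close> describes the subcube of \<open>Q\<^sub>n\<close> in which coordinate \<open>i\<close> is
  fixed to \<open>b\<close> if \<open>p ! i = Some b\<close> and free if \<open>p ! i = None\<close>.\<close>

definition subcube :: "nat \<Rightarrow> bool option list \<Rightarrow> bool list set" where
  "subcube n p = {x \<in> cube n. \<forall>i<n. \<forall>b. p ! i = Some b \<longrightarrow> x ! i = b}"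

definition free_coords :: "bool option list \<Rightarrow> nat set" where
  "free_coords p = {i. i < length p \<and> p ! i = None}"

definition patterns :: "nat \<Rightarrow> nat \<Rightarrow> bool option list set" where
  "patterns n k = {p. length p = n \<and> card (free_coords p) = k}"

definition fill :: "bool option list \<Rightarrow> bool \<Rightarrow> bool list" where
  "fill p c = map (case_option c id) p"

lemma finite_free_coords [simp]: "finite (free_coords p)"
  by (simp add: free_coords_def)

lemma card_free_coords: "card (free_coords p) = count_list p None"
  by (simp add: free_coords_def count_list_eq_length_filter length_filter_conv_card eq_commute)

lemma free_coords_update_Some: "free_coords (q[j := Some d]) = free_coords q - {j}"
  by (cases "j < length q") (auto simp: free_coords_def nth_list_update)

lemma subcube_subset_cube: "subcube n p \<subseteq> cube n"
  by (auto simp: subcube_def)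

lemma length_subcube: "x \<in> subcube n p \<Longrightarrow> length x = n"
  by (simp add: subcube_def cube_def)

lemma fill_in_subcube: "length p = n \<Longrightarrow> fill p c \<in> subcube n p"
  by (auto simp: fill_def subcube_def cube_def)

lemma nth_fill: "i < length p \<Longrightarrow> fill p c ! i = (case p ! i of None \<Rightarrow> c | Some b \<Rightarrow> b)"
  by (simp add: fill_def option.case_eq_if)

lemma flip_in_subcube_iff:
  assumes "x \<in> subcube n p" "m < n"
  shows "flip x m \<in> subcube n p \<longleftrightarrow> p ! m = None"
proof
  assume flip: "flip x m \<in> subcube n p"
  show "p ! m = None"
  proof (cases "p ! m")
    case (Some b)
    then have "flip x m ! m = x ! m" using assms flip by (auto simp: subcube_def)
    then show ?thesis using assms by (simp add: nth_flip length_subcube)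
  qed
next
  assume "p ! m = None"
  then show "flip x m \<in> subcube n p"
    using assms by (auto simp: subcube_def cube_def nth_flip)
qed

lemma subcube_update:
  assumes "length q = n" "j \<in> free_coords q"
  shows "x \<in> subcube n (q[j := Some d]) \<longleftrightarrow> x \<in> subcube n q \<and> x ! j = d"
  using assms by (auto simp: subcube_def free_coords_def nth_list_update)

lemma subcube_mono_fixed:
  assumes "length p = n" "subcube n p \<subseteq> subcube n q" "i < n" "q ! i = Some b"
  shows "p ! i = Some b"
proof -
  have "fill p (\<not> b) \<in> subcube n q" using assms fill_in_subcube by blast
  then have "fill p (\<not> b) ! i = b" using assms by (auto simp: subcube_def)
  then show ?thesis using assms by (cases "p ! i") (auto simp: nth_fill)
qed

lemma inj_on_subcube: "inj_on (subcube n) {p. length p = n}"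
proof (rule inj_onI)
  fix p q assume "p \<in> {p. length p = n}" "q \<in> {p. length p = n}" and eq: "subcube n p = subcube n q"
  then have len: "length p = n" "length q = n" by auto
  show "p = q"
  proof (rule nth_equalityI)
    fix i assume "i < length p"
    then show "p ! i = q ! i"
      using subcube_mono_fixed[OF len(1), of q i] subcube_mono_fixed[OF len(2), of p i] eq len
      by (cases "p ! i"; cases "q ! i") auto
  qed (simp add: len)
qed

lemma is_3subcube_iff: "is_3subcube n C \<longleftrightarrow> (\<exists>p\<in>patterns n 3. C = subcube n p)"
proof
  assume "is_3subcube n C"
  then obtain I base where I: "I \<subseteq> {..<n}" "card I = 3"
    and C: "C = {x \<in> cube n. \<forall>i<n. i \<notin> I \<longrightarrow> x ! i = base ! i}"
    unfolding is_3subcube_def by blast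
  define p where "p = map (\<lambda>i. if i \<in> I then None else Some (base ! i)) [0..<n]"
  have "free_coords p = I" using I(1) by (auto simp: free_coords_def p_def split: if_splits)
  moreover have "C = subcube n p" by (auto simp: C subcube_def p_def)
  moreover have "length p = n" by (simp add: p_def)
  ultimately show "\<exists>p\<in>patterns n 3. C = subcube n p"
    using I(2) by (auto simp: patterns_def)
next
  assume "\<exists>p\<in>patterns n 3. C = subcube n p"
  then obtain p where p: "length p = n" "card (free_coords p) = 3" "C = subcube n p"
    by (auto simp: patterns_def)
  have "C = {x \<in> cube n. \<forall>i<n. i \<notin> free_coords p \<longrightarrow> x ! i = fill p False ! i}"
    using p by (auto simp: subcube_def free_coords_def nth_fill split: option.splits)
  moreover have "free_coords p \<subseteq> {..<n}" "fill p False \<in> cube n"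
    using p by (auto simp: free_coords_def fill_def cube_def)
  ultimately show "is_3subcube n C" unfolding is_3subcube_def using p(2) by blast
qed

section \<open>Copies of \<open>W\<^sub>1\<^sub>2\<close> are stars\<close>

definition closed_nbhd :: "nat \<Rightarrow> bool list set \<Rightarrow> bool list \<Rightarrow> bool list set" where
  "closed_nbhd n C v = {y \<in> C. y = v \<or> adj n v y}"

definition is_star :: "nat \<Rightarrow> bool list set \<Rightarrow> bool list set \<Rightarrow> bool" where
  "is_star n C S \<longleftrightarrow> (\<exists>v\<in>C. S \<inter> C = closed_nbhd n C v)"

lemma closed_nbhd_hamming:
  assumes "C \<subseteq> cube n" "v \<in> cube n"
  shows "closed_nbhd n C v = {y \<in> C. hamming n v y \<le> 1}"
  using assms hamming_eq_0_iff[OF assms(2)]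
  by (auto simp: closed_nbhd_def adj_iff_hamming le_Suc_eq)

lemma closed_nbhd_subcube:
  assumes "length p = n" "v \<in> subcube n p"
  shows "closed_nbhd n (subcube n p) v = insert v (flip v ` free_coords p)"
proof -
  have "y \<in> subcube n p \<and> adj n v y \<longleftrightarrow> y \<in> flip v ` free_coords p" for y
  proof
    assume "y \<in> subcube n p \<and> adj n v y"
    then obtain i where "i < n" "y = flip v i" "y \<in> subcube n p"
      using assms subcube_subset_cube adj_iff_flip by blast
    then show "y \<in> flip v ` free_coords p"
      using assms flip_in_subcube_iff by (auto simp: free_coords_def)
  next
    assume "y \<in> flip v ` free_coords p"
    then obtain i where "i < n" "p ! i = None" "y = flip v i"
      using assms(1) by (auto simp: free_coords_def)
    then show "y \<in> subcube n p \<and> adj n v y"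
      using assms subcube_subset_cube adj_iff_flip flip_in_subcube_iff by blast
  qed
  then show ?thesis using assms(2) by (auto simp: closed_nbhd_def)
qed

lemma cube_iso_image_closed_nbhd:
  assumes "cube_iso n C f" "x \<in> cube 3"
  shows "f ` closed_nbhd 3 (cube 3) x = closed_nbhd n C (f x)"
proof -
  have bij: "bij_betw f (cube 3) C"
    and adj: "\<And>y. y \<in> cube 3 \<Longrightarrow> adj 3 x y \<longleftrightarrow> adj n (f x) (f y)"
    using assms by (auto simp: cube_iso_def)
  have "y = x \<longleftrightarrow> f y = f x" if "y \<in> cube 3" for y
    using bij assms(2) that by (metis bij_betw_inv_into_left)
  then show ?thesis
    using bij adj by (auto simp: closed_nbhd_def bij_betw_def)
qed

lemma W12_eq_closed_nbhd: "W12 = closed_nbhd 3 (cube 3) [False, False, False]"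
proof -
  have "subcube 3 (replicate 3 None) = cube 3"
    by (simp add: subcube_def)
  then have "closed_nbhd 3 (cube 3) [False, False, False] =
      insert [False, False, False] (flip [False, False, False] ` free_coords (replicate 3 None))"
    using closed_nbhd_subcube[of "replicate 3 None" 3 "[False, False, False]"]
    by (simp add: cube_def)
  also have "free_coords (replicate 3 None) = {0, 1, 2}"
    by (auto simp: free_coords_def)
  finally show ?thesis by (simp add: W12_def flip_def insert_commute)
qed

lemma hamming_reindex:
  assumes h: "bij_betw h F {..<k}" and F: "F \<subseteq> {..<n}"
    and outside: "\<And>i. i < n \<Longrightarrow> i \<notin> F \<Longrightarrow> x' ! i = y' ! i"
    and inside: "\<And>i. i \<in> F \<Longrightarrow> x' ! i \<noteq> y' ! i \<longleftrightarrow> x ! h i \<noteq> y ! h i"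
  shows "hamming n x' y' = hamming k x y"
proof -
  have "{i. i < n \<and> x' ! i \<noteq> y' ! i} = {i \<in> F. x ! h i \<noteq> y ! h i}"
    using F outside inside by blast
  then have "hamming n x' y' = card {i \<in> F. x ! h i \<noteq> y ! h i}"
    by (simp add: hamming_def)
  also have "\<dots> = card (h ` {i \<in> F. x ! h i \<noteq> y ! h i})"
    by (rule card_image[symmetric], rule inj_on_subset[OF bij_betw_imp_inj_on[OF h]]) blast
  also have "h ` {i \<in> F. x ! h i \<noteq> y ! h i} = {j. j < k \<and> x ! j \<noteq> y ! j}"
    using bij_betw_imp_surj_on[OF h] by auto
  finally show ?thesis by (simp add: hamming_def)
qed

lemma subcube_isometry:
  assumes p: "length p = n" "card (free_coords p) = k" and v: "v \<in> subcube n p"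
  obtains f where "bij_betw f (cube k) (subcube n p)"
    "\<And>x y. hamming n (f x) (f y) = hamming k x y"
    "f (replicate k False) = v"
proof -
  let ?F = "free_coords p"
  obtain h where h: "bij_betw h ?F {..<k}"
    using finite_same_card_bij[of ?F "{..<k}"] p by auto
  have F_n: "?F \<subseteq> {..<n}" using p by (auto simp: free_coords_def)
  have h_k: "i \<in> ?F \<Longrightarrow> h i < k" for i using bij_betw_apply[OF h] by simp
  define f where "f x = map (\<lambda>i. if i \<in> ?F then v ! i \<noteq> x ! h i else v ! i) [0..<n]" for x
  have nth_f: "f x ! i = (if i \<in> ?F then v ! i \<noteq> x ! h i else v ! i)" if "i < n" for x i
    using that by (simp add: f_def)
  have fixed: "i < n \<Longrightarrow> i \<notin> ?F \<Longrightarrow> u \<in> subcube n p \<Longrightarrow> u ! i = v ! i" for i u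
    using p v by (auto simp: free_coords_def subcube_def)
  have f_in: "f x \<in> subcube n p" for x
    using v p by (auto simp: f_def subcube_def cube_def free_coords_def)
  have hamming_f: "hamming n (f x) (f y) = hamming k x y" for x y
    using F_n by (intro hamming_reindex[OF h]) (auto simp: nth_f)
  have "inj_on f (cube k)"
  proof (rule inj_onI)
    fix x y assume "x \<in> cube k" "y \<in> cube k" "f x = f y"
    moreover have "hamming k x y = 0"
      using hamming_f[of x y] \<open>f x = f y\<close> by (simp add: hamming_def)
    ultimately show "x = y" using hamming_eq_0_iff by blast
  qed
  moreover have "subcube n p \<subseteq> f ` cube k"
  proof
    fix u assume u: "u \<in> subcube n p"
    let ?g = "the_inv_into ?F h"
    define x where "x = map (\<lambda>j. v ! ?g j \<noteq> u ! ?g j) [0..<k]"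
    have "x ! h i = (v ! i \<noteq> u ! i)" if "i \<in> ?F" for i
      using h_k[OF that] the_inv_into_f_f[OF bij_betw_imp_inj_on[OF h] that] by (simp add: x_def)
    then have "u = f x"
      using u fixed by (intro nth_equalityI) (auto simp: length_subcube f_def)
    moreover have "x \<in> cube k" by (simp add: x_def cube_def)
    ultimately show "u \<in> f ` cube k" by blast
  qed
  moreover have "f (replicate k False) = v"
    using v h_k by (intro nth_equalityI) (simp_all add: f_def length_subcube nth_f)
  ultimately show thesis
    using that[of f] f_in hamming_f by (auto simp: bij_betw_def)
qed

lemma cube_iso_at:
  assumes "is_3subcube n C" "v \<in> C"
  obtains f where "cube_iso n C f" "f [False, False, False] = v"
proof -
  obtain p where p: "length p = n" "card (free_coords p) = 3" "C = subcube n p"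
    using assms(1) by (auto simp: is_3subcube_iff patterns_def)
  then obtain f where "bij_betw f (cube 3) C" "\<And>x y. hamming n (f x) (f y) = hamming 3 x y"
      "f (replicate 3 False) = v"
    using subcube_isometry assms(2) by metis
  moreover have "replicate 3 False = [False, False, False]"
    by (simp add: numeral_3_eq_3)
  ultimately show thesis
    using that[of f] by (simp add: cube_iso_def adj_iff_hamming)
qed

lemma gives_copy_W12_iff_is_star:
  assumes "is_3subcube n C"
  shows "gives_copy n W12 S C \<longleftrightarrow> is_star n C S"
proof
  assume "gives_copy n W12 S C"
  then obtain f where f: "cube_iso n C f" "f ` W12 = S \<inter> C"
    by (auto simp: gives_copy_def)
  have origin: "[False, False, False] \<in> cube 3" by (simp add: cube_def)
  have "S \<inter> C = f ` closed_nbhd 3 (cube 3) [False, False, False]"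
    using f(2) W12_eq_closed_nbhd by simp
  also have "\<dots> = closed_nbhd n C (f [False, False, False])"
    using cube_iso_image_closed_nbhd[OF f(1) origin] .
  moreover have "f [False, False, False] \<in> C"
    using f(1) origin by (auto simp: cube_iso_def bij_betw_def)
  ultimately show "is_star n C S" by (auto simp: is_star_def)
next
  assume "is_star n C S"
  then obtain v where "v \<in> C" "S \<inter> C = closed_nbhd n C v"
    by (auto simp: is_star_def)
  moreover obtain f where "cube_iso n C f" "f [False, False, False] = v"
    using cube_iso_at[OF assms \<open>v \<in> C\<close>] by blast
  moreover have "[False, False, False] \<in> cube 3" by (simp add: cube_def)
  ultimately show "gives_copy n W12 S C"
    using cube_iso_image_closed_nbhd W12_eq_closed_nbhd by (metis gives_copy_def)
qed

lemma Lambda_set_W12: "Lambda_set n W12 S = card {p \<in> patterns n 3. is_star n (subcube n p) S}"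
proof -
  have "{C. is_3subcube n C \<and> gives_copy n W12 S C} = {C. is_3subcube n C \<and> is_star n C S}"
    using gives_copy_W12_iff_is_star by blast
  also have "\<dots> = subcube n ` {p \<in> patterns n 3. is_star n (subcube n p) S}"
    by (auto simp: is_3subcube_iff)
  finally have "{C. is_3subcube n C \<and> gives_copy n W12 S C} =
      subcube n ` {p \<in> patterns n 3. is_star n (subcube n p) S}" .
  moreover have "inj_on (subcube n) {p \<in> patterns n 3. is_star n (subcube n p) S}"
    by (rule inj_on_subset[OF inj_on_subcube]) (auto simp: patterns_def)
  ultimately show ?thesis by (simp add: Lambda_set_def card_image)
qed

definition fixed_ones :: "bool option list \<Rightarrow> nat" where
  "fixed_ones p = count_list p (Some True)"

lemma fixed_ones_Cons [simp]:
  "fixed_ones (z # q) = (if z = Some True then Suc (fixed_ones q) else fixed_ones q)"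
  by (simp add: fixed_ones_def)

lemma finite_patterns: "finite (patterns n k)"
proof (rule finite_subset)
  show "patterns n k \<subseteq> {xs. set xs \<subseteq> UNIV \<and> length xs = n}"
    by (auto simp: patterns_def)
qed (use finite_lists_length_eq[of "UNIV :: bool option set" n] in simp)

lemma card_patterns_Suc_filter:
  "card {p \<in> patterns (Suc n) k. P p} =
     (if k = 0 then 0 else card {q \<in> patterns n (k - 1). P (None # q)}) +
     card {q \<in> patterns n k. P (Some True # q)} + card {q \<in> patterns n k. P (Some False # q)}"
proof -
  let ?N = "{q \<in> patterns n (k - 1). 0 < k \<and> P (None # q)}"
  let ?T = "{q \<in> patterns n k. P (Some True # q)}"
  let ?F = "{q \<in> patterns n k. P (Some False # q)}"
  let ?R = "Cons (Some True) ` ?T \<union> Cons (Some False) ` ?F"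
  have "p \<in> {p \<in> patterns (Suc n) k. P p} \<longleftrightarrow>
      p \<in> Cons None ` ?N \<union> ?R" for p
  proof (cases p)
    case (Cons z q)
    have "z = None \<or> z = Some True \<or> z = Some False" by (cases z) auto
    then show ?thesis using Cons by (auto simp: patterns_def card_free_coords)
  qed (auto simp: patterns_def)
  then have "{p \<in> patterns (Suc n) k. P p} = Cons None ` ?N \<union> ?R"
    by blast
  then have "card {p \<in> patterns (Suc n) k. P p} = card (Cons None ` ?N \<union> ?R)"
    by simp
  also have "\<dots> = card (Cons None ` ?N) + card ?R"
    by (rule card_Un_disjoint) (auto simp: finite_patterns)
  also have "card ?R = card ?T + card ?F"
    by (subst card_Un_disjoint) (auto simp: finite_patterns card_image)
  finally show ?thesis by (cases k) (simp_all add: card_image)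
qed

lemma card_patterns: "card (patterns n k) = (n choose k) * 2 ^ (n - k)"
proof (induction n arbitrary: k)
  case 0
  have "patterns 0 k = (if k = 0 then {[]} else {})"
    by (auto simp: patterns_def free_coords_def)
  then show ?case by simp
next
  case (Suc n)
  have rec: "card (patterns (Suc n) k) =
      (if k = 0 then 0 else card (patterns n (k - 1))) + 2 * card (patterns n k)"
    using card_patterns_Suc_filter[of n k "\<lambda>_. True"] by simp
  show ?case
  proof (cases k)
    case 0
    then show ?thesis using rec Suc.IH by simp
  next
    case (Suc j)
    show ?thesis
    proof (cases "j < n")
      case True
      then have "n - j = Suc (n - k)" using Suc by simp
      then show ?thesis using rec Suc.IH \<open>k = Suc j\<close> by (simp add: algebra_simps)
    qed (use rec Suc.IH \<open>k = Suc j\<close> in simp)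
  qed
qed

lemma card_patterns_le_even_fixed_ones:
  "card (patterns n k) \<le> 2 * card {p \<in> patterns n k. even (fixed_ones p)}"
proof (induction n arbitrary: k)
  case 0
  have "patterns 0 k \<subseteq> {[]}"
    by (auto simp: patterns_def)
  then have "{p \<in> patterns 0 k. even (fixed_ones p)} = patterns 0 k"
    by (auto simp: fixed_ones_def)
  then show ?case by simp
next
  case (Suc n)
  let ?E = "\<lambda>j. {q \<in> patterns n j. even (fixed_ones q)}"
  have rec_even: "card {p \<in> patterns (Suc n) k. even (fixed_ones p)} =
      (if k = 0 then 0 else card (?E (k - 1))) +
      card {q \<in> patterns n k. odd (fixed_ones q)} + card (?E k)"
    using card_patterns_Suc_filter[of n k "\<lambda>p. even (fixed_ones p)"] by simp
  have "card {q \<in> patterns n k. odd (fixed_ones q)} + card (?E k) = card (patterns n k)"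
    by (subst card_Un_disjoint[symmetric]) (auto simp: finite_patterns intro: arg_cong[where f = card])
  then have "card {p \<in> patterns (Suc n) k. even (fixed_ones p)} =
      (if k = 0 then 0 else card (?E (k - 1))) + card (patterns n k)"
    by (simp only: rec_even add.assoc)
  moreover have "card (patterns (Suc n) k) =
      (if k = 0 then 0 else card (patterns n (k - 1))) + 2 * card (patterns n k)"
    using card_patterns_Suc_filter[of n k "\<lambda>_. True"] by simp
  ultimately show ?case using Suc.IH[of "k - 1"] by auto
qed

section \<open>Upper bound by double counting\<close>

definition star_centred :: "nat \<Rightarrow> bool option list \<Rightarrow> bool list set \<Rightarrow> bool list \<Rightarrow> bool" where
  "star_centred n p S v \<longleftrightarrow>
     v \<in> subcube n p \<and> S \<inter> subcube n p = insert v (flip v ` free_coords p)"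

lemma is_star_subcube_iff:
  "length p = n \<Longrightarrow> is_star n (subcube n p) S \<longleftrightarrow> (\<exists>v. star_centred n p S v)"
  by (auto simp: is_star_def star_centred_def closed_nbhd_subcube)

lemma star_centred_facet_iff:
  assumes "length q = n" "j \<in> free_coords q" "star_centred n (q[j := Some d]) S v"
  shows "x \<in> S \<and> x \<in> subcube n q \<and> x ! j = d \<longleftrightarrow> x \<in> insert v (flip v ` (free_coords q - {j}))"
proof -
  have "x \<in> S \<inter> subcube n (q[j := Some d]) \<longleftrightarrow> x \<in> insert v (flip v ` (free_coords q - {j}))"
    using assms(3) by (simp add: star_centred_def free_coords_update_Some)
  then show ?thesis by (simp add: subcube_update[OF assms(1,2)])
qed

lemma star_centred_facets_same_centre:
  assumes q: "length q = n" and ik: "i \<in> free_coords q" "k \<in> free_coords q"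
    and m: "m1 \<in> free_coords q - {i, k}" "m2 \<in> free_coords q - {i, k}" "m1 \<noteq> m2"
    and v: "star_centred n (q[i := Some c]) S v"
    and w: "star_centred n (q[k := Some b]) S w" "w ! i = c"
  shows "w = v"
proof (rule ccontr)
  let ?F = "free_coords q"
  have lt: "j \<in> ?F \<Longrightarrow> j < n" for j using q by (simp add: free_coords_def)
  have in_v: "x \<in> S \<and> x \<in> subcube n q \<and> x ! i = c \<longleftrightarrow> x \<in> insert v (flip v ` (?F - {i}))" for x
    using star_centred_facet_iff[OF q ik(1) v] .
  have in_w: "x \<in> S \<and> x \<in> subcube n q \<and> x ! k = b \<longleftrightarrow> x \<in> insert w (flip w ` (?F - {k}))" for x
    using star_centred_facet_iff[OF q ik(2) w(1)] .
  have len: "length v = n" "length w = n"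
    using in_v[of v] in_w[of w] length_subcube by auto
  assume "w \<noteq> v"
  (* then w is a leaf v + e_a, and its neighbour w + e_m stays in the star only if m = a *)
  then obtain a where a: "a \<in> ?F" "w = flip v a" using in_v[of w] in_w[of w] w(2) by auto
  have "a = m" if m': "m \<in> {m1, m2}" for m
  proof (rule ccontr)
    assume "a \<noteq> m"
    have other: "m \<in> ?F" "m \<noteq> i" "m \<noteq> k" using m m' by auto
    then have "flip w m \<in> insert w (flip w ` (?F - {k}))" by blast
    then have "flip w m \<in> S" "flip w m \<in> subcube n q" using in_w by blast+
    moreover have "flip w m ! i = c" using other w(2) len lt ik by (simp add: nth_flip)
    ultimately have "flip (flip v a) m \<in> insert v (flip v ` (?F - {i}))" using in_v a(2) by blast
    moreover have "a < length v" "m < length v" using a(1) other lt len by auto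
    ultimately show False using flip_flip_notin_star \<open>a \<noteq> m\<close> by blast
  qed
  then show False using m(3) by blast
qed

lemma star_centred_facet_flip_flip_notin:
  assumes q: "length q = n" and k: "k \<in> free_coords q"
    and v: "star_centred n (q[k := Some b]) S v"
    and im: "i \<in> free_coords q - {k}" "m \<in> free_coords q - {k}" "i \<noteq> m"
  shows "flip (flip v i) m \<notin> S"
proof
  let ?F = "free_coords q"
  have in_v: "x \<in> S \<and> x \<in> subcube n q \<and> x ! k = b \<longleftrightarrow> x \<in> insert v (flip v ` (?F - {k}))" for x
    using star_centred_facet_iff[OF q k v] .
  have lt: "i < n" "m < n" "length v = n"
    using q im in_v[of v] length_subcube by (auto simp: free_coords_def)
  assume "flip (flip v i) m \<in> S"
  moreover have "flip (flip v i) m \<in> subcube n q"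
    using in_v[of v] im lt flip_in_subcube_iff by (simp add: free_coords_def)
  moreover have "flip (flip v i) m ! k = b"
    using in_v[of v] im lt k q by (auto simp: nth_flip free_coords_def)
  ultimately have "flip (flip v i) m \<in> insert v (flip v ` (?F - {k}))" using in_v by blast
  then show False using flip_flip_notin_star lt im by auto
qed

lemma opposite_star_facets_oriented:
  assumes q: "length q = n" "card (free_coords q) = 4"
    and ik: "i \<in> free_coords q" "k \<in> free_coords q" "k \<noteq> i"
    and v: "star_centred n (q[i := Some c]) S v"
    and v': "star_centred n (q[i := Some (\<not> c)]) S v'"
    and w: "star_centred n (q[k := Some b]) S w" "w ! i = c"
  shows "v' = flip (flip v i) k"
proof -
  let ?F = "free_coords q"
  have "card (?F - {i, k}) = 2" using q(2) ik by (simp add: card_Diff_subset)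
  then obtain m1 m2 where M: "?F - {i, k} = {m1, m2}" "m1 \<noteq> m2"
    by (auto simp: card_2_iff)
  have "w = v"
    using star_centred_facets_same_centre[OF q(1) ik(1,2) _ _ M(2) v w] M(1) by blast
  then have in_w: "x \<in> S \<and> x \<in> subcube n q \<and> x ! k = b \<longleftrightarrow> x \<in> insert v (flip v ` (?F - {k}))" for x
    using star_centred_facet_iff[OF q(1) ik(2) w(1)] by simp
  have in_v': "x \<in> S \<and> x \<in> subcube n q \<and> x ! i = (\<not> c) \<longleftrightarrow> x \<in> insert v' (flip v' ` (?F - {i}))" for x
    using star_centred_facet_iff[OF q(1) ik(1) v'] .
  have v_i: "v ! i = c" "length v = n"
    using star_centred_facet_iff[OF q(1) ik(1) v, of v] length_subcube by auto
  (* u = v + e_i is in the star of v', but its neighbours u + e_m for m \<noteq> i, k are not in S,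
     so u is a leaf of that star and v' = u + e_k *)
  define u where "u = flip v i"
  have "u \<in> insert v (flip v ` (?F - {k}))" using ik by (simp add: u_def)
  moreover have "u ! i = (\<not> c)" using v_i ik q(1) by (simp add: u_def nth_flip free_coords_def)
  ultimately have u_v': "u \<in> insert v' (flip v' ` (?F - {i}))" using in_v' in_w by blast
  have flip_u_notin: "flip u m \<notin> S" if "m \<in> {m1, m2}" for m
  proof -
    have "star_centred n (q[k := Some b]) S v" using w(1) \<open>w = v\<close> by simp
    moreover have "i \<in> ?F - {k}" "m \<in> ?F - {k}" "i \<noteq> m" using ik M that by auto
    ultimately show ?thesis unfolding u_def by (rule star_centred_facet_flip_flip_notin[OF q(1) ik(2)])
  qed
  have "u \<noteq> v'"
  proof
    assume "u = v'"
    have "flip v' m1 \<in> insert v' (flip v' ` (?F - {i}))" using M(1) by blast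
    then have "flip u m1 \<in> S" using in_v' \<open>u = v'\<close> by blast
    then show False using flip_u_notin by blast
  qed
  then obtain m where m: "m \<in> ?F - {i}" "u = flip v' m" using u_v' by auto
  then have "v' = flip u m" by simp
  have "v' \<in> S" using in_v'[of v'] by blast
  then have "m \<notin> {m1, m2}" using flip_u_notin \<open>v' = flip u m\<close> by blast
  then have "m = k" using m(1) M(1) by blast
  then show ?thesis using \<open>v' = flip u m\<close> u_def by simp
qed

lemma opposite_star_facets:
  assumes q: "length q = n" "card (free_coords q) = 4"
    and ik: "i \<in> free_coords q" "k \<in> free_coords q" "k \<noteq> i"
    and v: "star_centred n (q[i := Some c]) S v"
    and v': "star_centred n (q[i := Some (\<not> c)]) S v'"
    and w: "star_centred n (q[k := Some b]) S w"
  shows "v' = flip (flip v i) k"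
proof (cases "w ! i = c")
  case True
  show ?thesis by (rule opposite_star_facets_oriented[OF q ik v v' w True])
next
  case False
  have "star_centred n (q[i := Some (\<not> \<not> c)]) S v" using v by simp
  moreover have "w ! i = (\<not> c)" using False by simp
  ultimately have "v = flip (flip v' i) k"
    using opposite_star_facets_oriented[OF q ik v'] w by blast
  then show ?thesis by (simp add: flip_commute[of v' i k])
qed

definition star_facets :: "nat \<Rightarrow> bool option list \<Rightarrow> bool list set \<Rightarrow> (nat \<times> bool) set" where
  "star_facets n q S = {(j, d). j \<in> free_coords q \<and> is_star n (subcube n (q[j := Some d])) S}"

lemma mem_star_facets_iff:
  "length q = n \<Longrightarrow>
    (j, d) \<in> star_facets n q S \<longleftrightarrow> j \<in> free_coords q \<and> (\<exists>v. star_centred n (q[j := Some d]) S v)"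
  using is_star_subcube_iff[of "q[j := Some d]" n] by (simp add: star_facets_def)

lemma finite_star_facets: "finite (star_facets n q S)"
  by (rule finite_subset[of _ "free_coords q \<times> UNIV"]) (auto simp: star_facets_def)

lemma card_star_facets_opposite_le_4:
  assumes q: "length q = n" "card (free_coords q) = 4"
    and j: "(j, d) \<in> star_facets n q S" "(j, \<not> d) \<in> star_facets n q S"
  shows "card (star_facets n q S) \<le> 4"
proof -
  obtain v v' where j_free: "j \<in> free_coords q" and v: "star_centred n (q[j := Some d]) S v"
    and v': "star_centred n (q[j := Some (\<not> d)]) S v'"
    using j[THEN mem_star_facets_iff[OF q(1), THEN iffD1]] by blast
  let ?K = "{k \<in> free_coords q. v' = flip (flip v j) k}"
  have "k = j \<or> k \<in> ?K" if kb: "(k, b) \<in> star_facets n q S" for k b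
  proof (cases "k = j")
    case False
    obtain w where "k \<in> free_coords q" "star_centred n (q[k := Some b]) S w"
      using kb[THEN mem_star_facets_iff[OF q(1), THEN iffD1]] by blast
    then show ?thesis using opposite_star_facets[OF q j_free _ False v v'] by blast
  qed simp
  then have "star_facets n q S \<subseteq> insert j ?K \<times> UNIV" by auto
  then have "card (star_facets n q S) \<le> card (insert j ?K \<times> (UNIV :: bool set))"
    by (rule card_mono[rotated]) simp
  moreover have "card ?K \<le> Suc 0"
  proof (subst card_le_Suc0_iff_eq)
    have "length (flip v j) = n" using v length_subcube by (auto simp: star_centred_def)
    then show "\<forall>k1\<in>?K. \<forall>k2\<in>?K. k1 = k2"
      using flip_inj[of _ "flip v j"] q(1) by (auto simp: free_coords_def)
  qed simp
  then have "card (insert j ?K) \<le> 2"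
    by (intro card_insert_le_m1) simp_all
  then have "card (insert j ?K \<times> (UNIV :: bool set)) \<le> 4"
    by (simp add: card_cartesian_product)
  ultimately show ?thesis by linarith
qed

lemma card_star_facets_le_4:
  assumes q: "length q = n" "card (free_coords q) = 4"
  shows "card (star_facets n q S) \<le> 4"
proof (cases "inj_on fst (star_facets n q S)")
  case True
  then have "card (star_facets n q S) = card (fst ` star_facets n q S)" by (simp add: card_image)
  also have "\<dots> \<le> card (free_coords q)" by (rule card_mono) (auto simp: star_facets_def)
  finally show ?thesis using q(2) by simp
next
  case False
  then obtain x y where xy: "x \<in> star_facets n q S" "y \<in> star_facets n q S" "fst x = fst y" "x \<noteq> y"
    unfolding inj_on_def by blast
  have "y = (fst x, \<not> snd x)" using xy(3,4) by (auto simp: prod_eq_iff)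
  then have "(fst x, \<not> snd x) \<in> star_facets n q S" using xy(2) by simp
  moreover have "(fst x, snd x) \<in> star_facets n q S" using xy(1) by simp
  ultimately show ?thesis by (rule card_star_facets_opposite_le_4[OF q, rotated])
qed

definition facet_of :: "bool option list \<Rightarrow> bool option list \<Rightarrow> bool" where
  "facet_of p q \<longleftrightarrow> (\<exists>j\<in>free_coords q. \<exists>d. p = q[j := Some d])"

lemma card_facet_of_patterns:
  assumes p: "p \<in> patterns n k"
  shows "card {q \<in> patterns n (Suc k). facet_of p q} = n - k"
proof -
  have lp: "length p = n" "card (free_coords p) = k" using p by (auto simp: patterns_def)
  let ?A = "{..<n} - free_coords p"
  have "{q \<in> patterns n (Suc k). facet_of p q} = (\<lambda>i. p[i := None]) ` ?A"
  proof (intro set_eqI iffI)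
    fix q assume "q \<in> {q \<in> patterns n (Suc k). facet_of p q}"
    then obtain j d where j: "j \<in> free_coords q" "p = q[j := Some d]"
      by (auto simp: facet_of_def)
    then have "q = p[j := None]"
      by (metis (mono_tags) free_coords_def list_update_id list_update_overwrite mem_Collect_eq)
    moreover have "j \<in> ?A" using j lp(1) by (auto simp: free_coords_def)
    ultimately show "q \<in> (\<lambda>i. p[i := None]) ` ?A" by blast
  next
    fix q assume "q \<in> (\<lambda>i. p[i := None]) ` ?A"
    then obtain i where i: "i < n" "i \<notin> free_coords p" "q = p[i := None]" by auto
    then obtain d where d: "p ! i = Some d" using lp(1) by (auto simp: free_coords_def)
    have "free_coords q = insert i (free_coords p)"
      using i lp(1) by (auto simp: free_coords_def nth_list_update)
    then have "q \<in> patterns n (Suc k)" using i(2,3) lp by (simp add: patterns_def)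
    moreover have "p = q[i := Some d]" using i(3) d by (metis list_update_id list_update_overwrite)
    moreover have "i \<in> free_coords q" using i(1,3) lp(1) by (simp add: free_coords_def)
    ultimately show "q \<in> {q \<in> patterns n (Suc k). facet_of p q}"
      unfolding facet_of_def by blast
  qed
  moreover have "inj_on (\<lambda>i. p[i := None]) ?A"
  proof (rule inj_onI)
    fix i i' assume i: "i \<in> ?A" and eq: "p[i := None] = p[i' := None]"
    show "i = i'"
    proof (rule ccontr)
      assume "i \<noteq> i'"
      then have "p[i' := None] ! i = p ! i" by simp
      moreover have "p ! i \<noteq> None" "p[i := None] ! i = None"
        using i lp(1) by (auto simp: free_coords_def)
      ultimately show False using eq by simp
    qed
  qed
  moreover have "card ?A = n - k"
    using lp by (simp add: card_Diff_subset free_coords_def subset_eq)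
  ultimately show ?thesis by (simp add: card_image)
qed

lemma card_star_facets_of_le_4:
  assumes q: "q \<in> patterns n 4"
  shows "card {p \<in> patterns n 3. is_star n (subcube n p) S \<and> facet_of p q} \<le> 4"
proof -
  have "{p \<in> patterns n 3. is_star n (subcube n p) S \<and> facet_of p q}
      \<subseteq> (\<lambda>(j, d). q[j := Some d]) ` star_facets n q S"
  proof
    fix p assume "p \<in> {p \<in> patterns n 3. is_star n (subcube n p) S \<and> facet_of p q}"
    then obtain j d where "j \<in> free_coords q" "p = q[j := Some d]" "is_star n (subcube n p) S"
      by (auto simp: facet_of_def)
    then show "p \<in> (\<lambda>(j, d). q[j := Some d]) ` star_facets n q S"
      by (intro image_eqI[of _ _ "(j, d)"]) (auto simp: star_facets_def)
  qed
  then have "card {p \<in> patterns n 3. is_star n (subcube n p) S \<and> facet_of p q}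
      \<le> card ((\<lambda>(j, d). q[j := Some d]) ` star_facets n q S)"
    by (rule card_mono[OF finite_imageI[OF finite_star_facets]])
  also have "\<dots> \<le> card (star_facets n q S)" by (rule card_image_le[OF finite_star_facets])
  also have "\<dots> \<le> 4" using q card_star_facets_le_4 by (simp add: patterns_def)
  finally show ?thesis .
qed

lemma Lambda_set_W12_upper:
  assumes n: "4 \<le> n"
  shows "2 * Lambda_set n W12 S \<le> (n choose 3) * 2 ^ (n - 3)"
proof -
  let ?A = "{p \<in> patterns n 3. is_star n (subcube n p) S}"
  have "(n - 3) * card ?A = (\<Sum>p\<in>?A. n - 3)" by simp
  also have "\<dots> = (\<Sum>p\<in>?A. card {q \<in> patterns n 4. facet_of p q})"
    using card_facet_of_patterns[of _ n 3] by (intro sum.cong) simp_all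
  also have "\<dots> = (\<Sum>q\<in>patterns n 4. card {p \<in> ?A. facet_of p q})"
    using sum.swap_restrict[of ?A "patterns n 4" "\<lambda>_ _. 1 :: nat" facet_of]
    by (simp add: finite_patterns)
  also have "\<dots> \<le> (\<Sum>q\<in>patterns n 4. 4)"
  proof (rule sum_mono)
    fix q assume "q \<in> patterns n 4"
    moreover have "{p \<in> ?A. facet_of p q} = {p \<in> patterns n 3. is_star n (subcube n p) S \<and> facet_of p q}"
      by blast
    ultimately show "card {p \<in> ?A. facet_of p q} \<le> 4"
      using card_star_facets_of_le_4 by simp
  qed
  also have "\<dots> = (n - 3) * ((n choose 3) * 2 ^ (n - 4))"
    using binomial_absorption[of 3 n] binomial_absorb_comp[of n 3]
    by (simp add: card_patterns)
  finally have "card ?A \<le> (n choose 3) * 2 ^ (n - 4)" using n by simp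
  moreover have "n - 3 = Suc (n - 4)" using n by simp
  ultimately show ?thesis by (simp add: Lambda_set_W12)
qed

section \<open>Lower bound\<close>

definition weight :: "bool list \<Rightarrow> nat" where
  "weight x = count_list x True"

definition weight_01_mod_4 :: "nat \<Rightarrow> bool list set" where
  "weight_01_mod_4 n = {x \<in> cube n. weight x mod 4 \<in> {0, 1}}"

lemma weight_subcube:
  assumes p: "length p = n" and x: "x \<in> subcube n p"
  shows "weight x = fixed_ones p + card {i \<in> free_coords p. x ! i}"
proof -
  have "{i. i < n \<and> x ! i} = {i. i < n \<and> p ! i = Some True} \<union> {i \<in> free_coords p. x ! i}"
    using p x by (auto simp: subcube_def free_coords_def) (metis (full_types) option.exhaust)
  moreover have "{i. i < n \<and> p ! i = Some True} \<inter> {i \<in> free_coords p. x ! i} = {}"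
    by (auto simp: free_coords_def)
  ultimately have "card {i. i < n \<and> x ! i} = card {i. i < n \<and> p ! i = Some True} + card {i \<in> free_coords p. x ! i}"
    by (simp add: card_Un_disjoint free_coords_def)
  then show ?thesis
    using p length_subcube[OF x]
    by (simp add: weight_def fixed_ones_def count_list_eq_length_filter length_filter_conv_card eq_commute)
qed

lemma hamming_fill:
  assumes p: "length p = n" and x: "x \<in> subcube n p"
  shows "hamming n (fill p c) x = card {i \<in> free_coords p. x ! i \<noteq> c}"
proof -
  have "{i. i < n \<and> fill p c ! i \<noteq> x ! i} = {i \<in> free_coords p. x ! i \<noteq> c}"
    using p x by (auto simp: subcube_def free_coords_def nth_fill split: option.splits)
  then show ?thesis by (simp add: hamming_def)
qed

lemma mod_4_in_01_iff:
  fixes b t :: nat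
  assumes "even b" "t \<le> 3"
  shows "(b + (if b mod 4 = 2 then 3 - t else t)) mod 4 \<in> {0, 1} \<longleftrightarrow> t \<le> 1"
proof -
  have "b mod 4 = 0 \<or> b mod 4 = 2" using assms(1) by presburger
  moreover have "t = 0 \<or> t = 1 \<or> t = 2 \<or> t = 3" using assms(2) by auto
  ultimately show ?thesis by (elim disjE; simp; presburger)
qed

lemma is_star_weight_01_mod_4:
  assumes p: "p \<in> patterns n 3" and even: "even (fixed_ones p)"
  shows "is_star n (subcube n p) (weight_01_mod_4 n)"
proof -
  have len: "length p = n" and F: "card (free_coords p) = 3" using p by (auto simp: patterns_def)
  (* a vertex at distance t from the centre fill p c has weight fixed_ones p + t if c is false
     and fixed_ones p + 3 - t if c is true *)
  define c where "c = (fixed_ones p mod 4 = 2)"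
  define v where "v = fill p c"
  have v: "v \<in> subcube n p" using fill_in_subcube[OF len] by (simp add: v_def)
  have "x \<in> weight_01_mod_4 n \<longleftrightarrow> hamming n v x \<le> 1" if x: "x \<in> subcube n p" for x
  proof -
    let ?D = "{i \<in> free_coords p. x ! i \<noteq> c}"
    have "?D \<subseteq> free_coords p" by blast
    then have D: "card ?D \<le> 3" using F card_mono[of "free_coords p" ?D] by simp
    have ones: "card {i \<in> free_coords p. x ! i} = (if c then 3 - card ?D else card ?D)"
    proof (cases c)
      case True
      then have "{i \<in> free_coords p. x ! i} = free_coords p - ?D" by auto
      then show ?thesis using True F by (simp add: card_Diff_subset)
    qed simp
    have "x \<in> cube n" using x subcube_subset_cube by blast
    then have "x \<in> weight_01_mod_4 n \<longleftrightarrow> weight x mod 4 \<in> {0, 1}"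
      by (simp add: weight_01_mod_4_def)
    also have "weight x = fixed_ones p + (if fixed_ones p mod 4 = 2 then 3 - card ?D else card ?D)"
      using weight_subcube[OF len x] ones by (simp add: c_def)
    also have "\<dots> mod 4 \<in> {0, 1} \<longleftrightarrow> card ?D \<le> 1"
      by (rule mod_4_in_01_iff[OF even D])
    also have "card ?D = hamming n v x"
      using hamming_fill[OF len x] by (simp add: v_def)
    finally show ?thesis .
  qed
  then have "weight_01_mod_4 n \<inter> subcube n p = {x \<in> subcube n p. hamming n v x \<le> 1}"
    by blast
  also have "\<dots> = closed_nbhd n (subcube n p) v"
    using closed_nbhd_hamming[OF subcube_subset_cube] v subcube_subset_cube by blast
  finally show ?thesis using v unfolding is_star_def by blast
qed

lemma Lambda_set_W12_weight_01_mod_4: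
  "(n choose 3) * 2 ^ (n - 3) \<le> 2 * Lambda_set n W12 (weight_01_mod_4 n)"
proof -
  have "card {p \<in> patterns n 3. even (fixed_ones p)}
      \<le> card {p \<in> patterns n 3. is_star n (subcube n p) (weight_01_mod_4 n)}"
    using is_star_weight_01_mod_4 by (intro card_mono) (auto simp: finite_patterns)
  then show ?thesis
    using card_patterns_le_even_fixed_ones[of n 3] by (simp add: card_patterns Lambda_set_W12)
qed

lemma Lambda_set_W12_le: "Lambda_set n W12 S \<le> (n choose 3) * 2 ^ (n - 3)"
  unfolding Lambda_set_W12 card_patterns[symmetric]
  by (rule card_mono) (auto simp: finite_patterns)

lemma Lambda_eqI:
  assumes "S\<^sub>0 \<subseteq> cube n" "\<And>S. S \<subseteq> cube n \<Longrightarrow> Lambda_set n H S \<le> Lambda_set n H S\<^sub>0"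
  shows "Lambda H n = Lambda_set n H S\<^sub>0"
proof -
  have "{Lambda_set n H S | S. S \<subseteq> cube n} = Lambda_set n H ` Pow (cube n)" by auto
  then have "finite {Lambda_set n H S | S. S \<subseteq> cube n}" using finite_cube by simp
  then show ?thesis unfolding Lambda_def by (rule Max_eqI) (use assms in auto)
qed

theorem theorem1p2:
  shows "Lambda W12 3 = 1 \<and>
    (\<forall>n::nat. n \<ge> 4 \<longrightarrow> real (Lambda W12 n) = 1/2 * real (n choose 3) * 2 ^ (n - 3))"
proof -
  have S_cube: "weight_01_mod_4 n \<subseteq> cube n" for n by (auto simp: weight_01_mod_4_def)
  note lower = Lambda_set_W12_weight_01_mod_4
  have "Lambda W12 3 = Lambda_set 3 W12 (weight_01_mod_4 3)"
  proof (rule Lambda_eqI[OF S_cube])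
    show "Lambda_set 3 W12 S \<le> Lambda_set 3 W12 (weight_01_mod_4 3)" for S
      using Lambda_set_W12_le[of 3 S] lower[of 3] by simp
  qed
  moreover have "Lambda_set 3 W12 (weight_01_mod_4 3) = 1"
    using Lambda_set_W12_le[of 3 "weight_01_mod_4 3"] lower[of 3] by simp
  moreover have "real (Lambda W12 n) = 1/2 * real (n choose 3) * 2 ^ (n - 3)" if n: "4 \<le> n" for n
  proof -
    have "Lambda W12 n = Lambda_set n W12 (weight_01_mod_4 n)"
    proof (rule Lambda_eqI[OF S_cube])
      show "Lambda_set n W12 S \<le> Lambda_set n W12 (weight_01_mod_4 n)" for S
        using Lambda_set_W12_upper[OF n, of S] lower[of n] by linarith
    qed
    then have "2 * Lambda W12 n = (n choose 3) * 2 ^ (n - 3)"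
      using Lambda_set_W12_upper[OF n, of "weight_01_mod_4 n"] lower[of n] by linarith
    then have "real (2 * Lambda W12 n) = real ((n choose 3) * 2 ^ (n - 3))" by (rule arg_cong)
    then show ?thesis by simp
  qed
  ultimately show ?thesis by simp
qed

end
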